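(* Let $\mathrm{Aut}(\mathcal{NR})$ be the setwise stabiliser of the Nordstrom-Robinson code $\mathcal{NR}$ in $\mathrm{Aut}(\Gamma_{16})=T\rtimes L$, and let $\mu:\mathrm{Aut}(\mathcal{NR})\to S_{16}$ be the homomorphism $g\sigma\mapsto\sigma$ (for $g\in T$, $\sigma\in L$). Then the kernel of $\mu$ equals $T_{\mathcal{R}}=\{\beta\mapsto\beta+\alpha : \alpha\in\mathcal{R}\}$, the group of translations of $\mathbb{F}_2^{16}$ by elements of $\mathcal{R}$.
   Context: $\Gamma_{16}$ is the binary Hamming graph on $\mathbb{F}_2^{16}$; $\mathrm{Aut}(\Gamma_{16})=T\rtimes L$, where $T$ is the group of translations of $\mathbb{F}_2^{16}$ and $L\cong S_{16}$ is the group of coordinate permutations. Let $\mathcal{G}$ be the $[24,12,8]$ extended binary Golay code in $\mathbb{F}_2^{24}$, chosen so that $(1^8,0^{16})\in\mathcal{G}$. Let $J^*=\{1,\dots,8\}$, $J=\{9,\dots,24\}$, $\mathcal{D}^0=\{\alpha\in\mathcal{G}:\mathrm{supp}(\alpha)\cap J^*=\emptyset\}$ and, for $1\le i\le 7$, $\mathcal{D}^i=\{\alpha\in\mathcal{G}:\mathrm{supp}(\alpha)\cap J^*=\{i,8\}\}$. The Nordstrom-Robinson code $\mathcal{NR}\subseteq\mathbb{F}_2^{16}$ is the set of restrictions to the coordinates in $J$ of the vectors in $\bigcup_{i=0}^7\mathcal{D}^i$, and $\mathcal{R}\subseteq\mathcal{NR}$ is the set of restrictions to $J$ of the vectors in $\mathcal{D}^0$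 (this is the Reed–Muller code $R(1,4)$). *)

theory Defs
  imports Main "HOL-Combinatorics.Permutations"
begin

text \<open>Binary vectors of length n are modelled by their supports: a vector of
  F_2^24 is a subset of {1..24}, and addition is symmetric difference.
  The 16 coordinates of F_2^16 are identified with J = {9..24}.\<close>

definition vadd :: "nat set \<Rightarrow> nat set \<Rightarrow> nat set" where
  "vadd A B = (A - B) \<union> (B - A)"

definition Jstar :: "nat set" where "Jstar = {1..8}"
definition Jset :: "nat set" where "Jset = {9..24}"

definition golay_code :: "nat set set \<Rightarrow> bool" where
  "golay_code G \<longleftrightarrow> G \<subseteq> Pow {1..24} \<and> {} \<in> G \<and>
     (\<forall>a\<in>G. \<forall>b\<in>G. vadd a b \<in> G) \<and> card G = 2^12 \<and>
     (\<forall>a\<in>G. a \<noteq> {} \<longrightarrow> card a \<ge> 8)"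

definition Dcode :: "nat set set \<Rightarrow> nat \<Rightarrow> nat set set" where
  "Dcode G i = (if i = 0 then {a \<in> G. a \<inter> Jstar = {}}
                else {a \<in> G. a \<inter> Jstar = {i, 8}})"

definition NR :: "nat set set \<Rightarrow> nat set set" where
  "NR G = (\<lambda>a. a \<inter> Jset) ` (\<Union>i\<in>{0..7}. Dcode G i)"

definition RM :: "nat set set \<Rightarrow> nat set set" where
  "RM G = (\<lambda>a. a \<inter> Jset) ` Dcode G 0"

text \<open>The element g\<sigma> of Aut(Gamma_16) = T \<rtimes> L, with g translation by alpha.\<close>
definition aut_map :: "nat set \<Rightarrow> (nat \<Rightarrow> nat) \<Rightarrow> nat set \<Rightarrow> nat set" where
  "aut_map \<alpha> \<sigma> = (\<lambda>\<beta>. vadd (\<sigma> ` \<beta>) \<alpha>)"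

definition AutGamma16 :: "(nat set \<Rightarrow> nat set) set" where
  "AutGamma16 = {f. \<exists>\<alpha> \<sigma>. \<alpha> \<subseteq> Jset \<and> \<sigma> permutes Jset \<and> f = aut_map \<alpha> \<sigma>}"

definition AutNR :: "nat set set \<Rightarrow> (nat set \<Rightarrow> nat set) set" where
  "AutNR G = {f \<in> AutGamma16. f ` NR G = NR G}"

definition mu :: "(nat set \<Rightarrow> nat set) \<Rightarrow> (nat \<Rightarrow> nat)" where
  "mu f = (THE \<sigma>. \<sigma> permutes Jset \<and> (\<exists>\<alpha>. \<alpha> \<subseteq> Jset \<and> f = aut_map \<alpha> \<sigma>))"

definition T_R :: "nat set set \<Rightarrow> (nat set \<Rightarrow> nat set) set" where
  "T_R G = (\<lambda>\<alpha>. (\<lambda>\<beta>. vadd \<beta> \<alpha>)) ` RM G"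

end

theory Submission
  imports Defs
begin

text \<open>A translation fixing the code is translation by a codeword, since the code contains 0.
  So the claim is that translation by a word of NR outside R never preserves NR. Such a word
  is the trace on J of a Golay word a meeting J* in {i, 8} with i \<noteq> 0. Because the Golay code
  is perfect after puncturing, every 4-subset of J* is the trace on J* of a codeword, hence so
  is every pair of J*; take d with trace {j, 8}, j \<noteq> i. If (d + a) \<inter> J were again the trace of some e
  from a D^k, then d + a + e would be a nonzero Golay word inside {i, j, k, 8}, contradicting
  minimum weight 8.\<close>

lemma vadd_vadd_cancel [simp]: "vadd (vadd A B) B = A"
  unfolding vadd_def by auto

lemma vadd_empty [simp]: "vadd A {} = A" "vadd {} A = A"
  unfolding vadd_def by auto

lemma vadd_self [simp]: "vadd A A = {}"
  unfolding vadd_def by auto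

lemma vadd_commute: "vadd A B = vadd B A"
  unfolding vadd_def by auto

lemma vadd_eq_empty_iff: "vadd A B = {} \<longleftrightarrow> A = B"
  unfolding vadd_def by auto

lemma vadd_Int_distrib: "vadd A B \<inter> S = vadd (A \<inter> S) (B \<inter> S)"
  unfolding vadd_def by auto

lemma finite_vadd [simp]: "finite A \<Longrightarrow> finite B \<Longrightarrow> finite (vadd A B)"
  unfolding vadd_def by auto

lemma card_vadd:
  assumes "finite A" "finite B"
  shows "card (vadd A B) + 2 * card (A \<inter> B) = card A + card B"
proof -
  have "card (vadd A B) = card (A - B) + card (B - A)"
    unfolding vadd_def using assms by (subst card_Un_disjoint) auto
  moreover have "card (A - B) = card A - card (A \<inter> B)" "card (B - A) = card B - card (A \<inter> B)"
    using assms by (simp_all add: card_Diff_subset_Int Int_commute)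
  moreover have "card (A \<inter> B) \<le> card A" "card (A \<inter> B) \<le> card B"
    using assms by (auto intro: card_mono)
  ultimately show ?thesis by linarith
qed

lemma card_vadd_le: "finite A \<Longrightarrow> finite B \<Longrightarrow> card (vadd A B) \<le> card A + card B"
  using card_vadd by fastforce

lemma card_vadd_triangle:
  assumes "finite A" "finite B" "finite C"
  shows "card (vadd A C) \<le> card (vadd A B) + card (vadd B C)"
proof -
  have "vadd A C = vadd (vadd A B) (vadd B C)"
    unfolding vadd_def by auto
  then show ?thesis
    using assms by (simp add: card_vadd_le)
qed

lemma card_small_subsets:
  assumes "finite U"
  shows "card {d \<in> Pow U. card d \<le> k} = (\<Sum>i\<le>k. card U choose i)"
proof -
  have "{d \<in> Pow U. card d \<le> k} = (\<Union>i\<le>k. {d. d \<subseteq> U \<and> card d = i})"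
    by auto
  also have "card \<dots> = (\<Sum>i\<le>k. card {d. d \<subseteq> U \<and> card d = i})"
    by (rule card_UN_disjoint) (auto intro: finite_subset[of _ "Pow U"] simp: assms)
  also have "\<dots> = (\<Sum>i\<le>k. card U choose i)"
    using n_subsets[OF assms] by simp
  finally show ?thesis .
qed

lemma vadd_subset: "A \<subseteq> U \<Longrightarrow> B \<subseteq> U \<Longrightarrow> vadd A B \<subseteq> U"
  unfolding vadd_def by auto

lemma card_hamming_ball:
  assumes "finite U" "C \<subseteq> U"
  shows "card {x \<in> Pow U. card (vadd x C) \<le> k} = (\<Sum>i\<le>k. card U choose i)"
proof -
  have "{x \<in> Pow U. card (vadd x C) \<le> k} = (\<lambda>d. vadd d C) ` {d \<in> Pow U. card d \<le> k}"
  proof (intro equalityI subsetI)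
    fix x assume "x \<in> {x \<in> Pow U. card (vadd x C) \<le> k}"
    then have "vadd x C \<in> {d \<in> Pow U. card d \<le> k}"
      using vadd_subset assms(2) by blast
    then show "x \<in> (\<lambda>d. vadd d C) ` {d \<in> Pow U. card d \<le> k}"
      by (rule image_eqI[rotated]) simp
  next
    fix x assume "x \<in> (\<lambda>d. vadd d C) ` {d \<in> Pow U. card d \<le> k}"
    then obtain d where "d \<subseteq> U" "card d \<le> k" "x = vadd d C"
      by blast
    then show "x \<in> {x \<in> Pow U. card (vadd x C) \<le> k}"
      using vadd_subset assms(2) by simp
  qed
  moreover have "inj_on (\<lambda>d. vadd d C) S" for S
    by (rule inj_onI) (metis vadd_vadd_cancel)
  ultimately show ?thesis
    using card_small_subsets[OF assms(1)] by (simp add: card_image)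
qed

lemma golay_word_subset: "golay_code G \<Longrightarrow> c \<in> G \<Longrightarrow> c \<subseteq> {1..24}"
  unfolding golay_code_def by auto

lemma golay_word_finite: "golay_code G \<Longrightarrow> c \<in> G \<Longrightarrow> finite c"
  using golay_word_subset finite_subset by blast

lemma golay_empty: "golay_code G \<Longrightarrow> {} \<in> G"
  unfolding golay_code_def by blast

lemma golay_vadd_closed: "golay_code G \<Longrightarrow> a \<in> G \<Longrightarrow> b \<in> G \<Longrightarrow> vadd a b \<in> G"
  unfolding golay_code_def by blast

lemma golay_small_word_empty: "golay_code G \<Longrightarrow> c \<in> G \<Longrightarrow> card c < 8 \<Longrightarrow> c = {}"
  unfolding golay_code_def by fastforce

lemma golay_dist:
  assumes "golay_code G" "c \<in> G" "c' \<in> G" "c \<noteq> c'"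
  shows "8 \<le> card (vadd c c')"
  using golay_small_word_empty[OF assms(1) golay_vadd_closed[OF assms(1-3)]] assms(4)
  by (fastforce simp: vadd_eq_empty_iff)

lemma golay_punctured_dist:
  assumes "golay_code G" "c \<in> G" "c' \<in> G" "c \<noteq> c'"
  shows "7 \<le> card (vadd (c - {y}) (c' - {y}))"
proof -
  have fin: "finite c" "finite c'"
    using golay_word_finite assms(1-3) by auto
  let ?D = "vadd (c - {y}) (c' - {y})"
  have "finite ?D"
    using fin by simp
  have "card (vadd c c') \<le> card (insert y ?D)"
    by (rule card_mono) (use \<open>finite ?D\<close> in \<open>auto simp: vadd_def\<close>)
  also have "\<dots> \<le> card ?D + 1"
    using \<open>finite ?D\<close> by (simp add: card_insert_if)
  finally show ?thesis
    using golay_dist[OF assms] by linarith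
qed

lemma sum_23_choose_le_3: "(\<Sum>i\<le>3. (23::nat) choose i) = 2^11"
proof -
  have "3 * (23 choose 3) = 23 * ((22::nat) choose 2)"
    using times_binomial_minus1_eq[of 3 23] by simp
  then show ?thesis
    by (simp add: atMost_nat_numeral choose_two)
qed

text \<open>Sphere packing: the 2^12 radius-3 balls around the punctured codewords are disjoint
  and have 2^11 points each, so they fill all of 2^23.\<close>

lemma golay_punctured_covering:
  assumes G: "golay_code G" and y: "y \<in> {1..24::nat}" and X: "X \<subseteq> {1..24} - {y}"
  shows "\<exists>c\<in>G. card (vadd X (c - {y})) \<le> 3"
proof -
  define U where "U = {1..24::nat} - {y}"
  define B where "B c = {x \<in> Pow U. card (vadd x (c - {y})) \<le> 3}" for c
  have fU: "finite U" and cU: "card U = 23"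
    using y unfolding U_def by auto
  have cG: "card G = 2^12" and fG: "finite G"
    using G unfolding golay_code_def by (auto intro: card_ge_0_finite)
  have card_B: "card (B c) = 2^11" if "c \<in> G" for c
  proof -
    have "c - {y} \<subseteq> U"
      using golay_word_subset[OF G that] unfolding U_def by blast
    then show ?thesis
      using card_hamming_ball[OF fU, of "c - {y}" 3] cU sum_23_choose_le_3 by (simp add: B_def)
  qed
  have disjoint: "B c \<inter> B c' = {}" if "c \<in> G" "c' \<in> G" "c \<noteq> c'" for c c'
  proof (rule ccontr)
    assume "B c \<inter> B c' \<noteq> {}"
    then obtain x where x: "x \<in> B c" "x \<in> B c'" by blast
    have "finite x"
      using x fU unfolding B_def by (auto intro: finite_subset)
    moreover have "finite (c - {y})" "finite (c' - {y})"
      using golay_word_finite[OF G] that by auto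
    ultimately have "card (vadd (c - {y}) (c' - {y}))
        \<le> card (vadd x (c - {y})) + card (vadd x (c' - {y}))"
      using card_vadd_triangle[of "c - {y}" x "c' - {y}"] by (simp add: vadd_commute)
    then have "card (vadd (c - {y}) (c' - {y})) \<le> 6"
      using x by (simp add: B_def)
    with golay_punctured_dist[OF G that, of y] show False by linarith
  qed
  have "card (\<Union>(B ` G)) = (\<Sum>c\<in>G. card (B c))"
    by (rule card_UN_disjoint) (use fG disjoint fU in \<open>auto simp: B_def intro: finite_subset\<close>)
  also have "\<dots> = card (Pow U)"
    using card_B cG cU fU by (simp add: card_Pow)
  finally have "\<Union>(B ` G) = Pow U"
    using fU by (intro card_subset_eq) (auto simp: B_def)
  then show ?thesis
    using X unfolding B_def U_def by auto
qed

lemma golay_octad_through: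
  assumes G: "golay_code G" and y: "y \<in> {1..24::nat}"
    and X: "X \<subseteq> {1..24} - {y}" "card X = 4"
  shows "\<exists>c\<in>G. card c = 8 \<and> insert y X \<subseteq> c"
proof -
  obtain c where c: "c \<in> G" "card (vadd X (c - {y})) \<le> 3"
    using golay_punctured_covering[OF G y X(1)] by blast
  have fc: "finite c" and fX: "finite X"
    using golay_word_finite[OF G c(1)] X by (auto intro: card_ge_0_finite)
  have "c \<noteq> {}"
    using c(2) X(2) by auto
  then have c8: "8 \<le> card c"
    using golay_small_word_empty[OF G c(1)] by linarith
  have balance: "card (vadd X (c - {y})) + 2 * card (X \<inter> (c - {y})) = 4 + card (c - {y})"
    using card_vadd[OF fX, of "c - {y}"] fc X(2) by simp
  have "card (X \<inter> (c - {y})) \<le> 4"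
    using X(2) card_mono[OF fX Int_lower1] by metis
  moreover have "card c \<le> card (c - {y}) + 1"
    using c8 by (simp add: card_Diff_singleton_if fc)
  ultimately have X_in: "card (X \<inter> (c - {y})) = 4" and c7: "card (c - {y}) = 7"
    using balance c(2) c8 by linarith+
  have "X \<subseteq> c"
    using card_subset_eq[OF fX Int_lower1 [of X "c - {y}"]] X_in X(2) by auto
  moreover have "y \<in> c"
  proof (rule ccontr)
    assume "y \<notin> c"
    then have "c - {y} = c"
      by blast
    with c7 c8 show False
      by simp
  qed
  moreover have "card c = 8"
    using c7 \<open>y \<in> c\<close> fc by (simp add: card_Diff_singleton)
  ultimately show ?thesis
    using c(1) by blast
qed

lemma golay_octads_meet:
  assumes G: "golay_code G" and c: "c \<in> G" "card c = 8" and c': "c' \<in> G" "card c' = 8"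
    and "c \<noteq> c'"
  shows "card (c \<inter> c') \<le> 4"
  using card_vadd[OF golay_word_finite[OF G c(1)] golay_word_finite[OF G c'(1)]]
    golay_dist[OF G c(1) c'(1) assms(6)] c(2) c'(2)
  by linarith

lemma card_Jstar: "card Jstar = 8" and Jstar_Un_Jset: "Jstar \<union> Jset = {1..24}"
  unfolding Jstar_def Jset_def by auto

lemma golay_trace_4subset:
  assumes G: "golay_code G" and J: "Jstar \<in> G" and X: "X \<subseteq> Jstar" "card X = 4"
  shows "\<exists>c\<in>G. c \<inter> Jstar = X"
proof -
  have "X \<subseteq> {1..24} - {9}"
    using X(1) unfolding Jstar_def by auto
  then obtain c where c: "c \<in> G" "card c = 8" "insert 9 X \<subseteq> c"
    using golay_octad_through[OF G _ _ X(2), of 9] by auto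
  have "c \<noteq> Jstar"
    using c(3) unfolding Jstar_def by auto
  then have "card (c \<inter> Jstar) \<le> 4"
    using golay_octads_meet[OF G c(1,2) J card_Jstar] by blast
  then have "X = c \<inter> Jstar"
    using X c(3) golay_word_finite[OF G c(1)] by (intro card_seteq) auto
  then show ?thesis
    using c(1) by blast
qed

lemma golay_trace_pair:
  assumes G: "golay_code G" and J: "Jstar \<in> G"
    and j: "j \<in> Jstar" "j' \<in> Jstar" "j \<noteq> j'"
  shows "\<exists>d\<in>G. d \<inter> Jstar = {j, j'}"
proof -
  have "card (Jstar - {j, j'}) = 6"
    using j card_Jstar by (simp add: card_Diff_subset Jstar_def)
  then obtain T where T: "T \<subseteq> Jstar - {j, j'}" "card T = 3" "finite T"
    using obtain_subset_with_card_n[of 3 "Jstar - {j, j'}"] by auto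
  then have "j \<notin> T" "j' \<notin> T" "T \<subseteq> Jstar"
    by auto
  then have "insert j T \<subseteq> Jstar" "card (insert j T) = 4"
    "insert j' T \<subseteq> Jstar" "card (insert j' T) = 4"
    using T(2,3) j by simp_all
  then obtain c c' where c: "c \<in> G" "c \<inter> Jstar = insert j T"
    and c': "c' \<in> G" "c' \<inter> Jstar = insert j' T"
    using golay_trace_4subset[OF G J] by meson
  have "vadd c c' \<inter> Jstar = {j, j'}"
    unfolding vadd_Int_distrib c(2) c'(2) using \<open>j \<notin> T\<close> \<open>j' \<notin> T\<close> j(3)
    by (auto simp: vadd_def)
  then show ?thesis
    using golay_vadd_closed[OF G c(1) c'(1)] by blast
qed

lemma Union_Dcode:
  "(\<Union>i\<in>{0..7}. Dcode G i) = {a \<in> G. a \<inter> Jstar = {} \<or> (\<exists>i\<in>{1..7}. a \<inter> Jstar = {i, 8})}"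
proof -
  have "{0..7::nat} = insert 0 {1..7}"
    by auto
  then show ?thesis
    unfolding Dcode_def by auto
qed

lemma mem_NR_iff:
  "x \<in> NR G \<longleftrightarrow>
     (\<exists>a\<in>G. x = a \<inter> Jset \<and> (a \<inter> Jstar = {} \<or> (\<exists>i\<in>{1..7}. a \<inter> Jstar = {i, 8})))"
  unfolding NR_def Union_Dcode by blast

lemma mem_RM_iff: "x \<in> RM G \<longleftrightarrow> (\<exists>a\<in>G. x = a \<inter> Jset \<and> a \<inter> Jstar = {})"
  unfolding RM_def Dcode_def by auto

lemma empty_in_NR: "golay_code G \<Longrightarrow> {} \<in> NR G"
  unfolding mem_NR_iff using golay_empty by auto

lemma vadd_RM_in_NR:
  assumes G: "golay_code G" and x: "x \<in> NR G" and r: "r \<in> RM G"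
  shows "vadd x r \<in> NR G"
proof -
  obtain a where a: "a \<in> G" "x = a \<inter> Jset"
    "a \<inter> Jstar = {} \<or> (\<exists>i\<in>{1..7}. a \<inter> Jstar = {i, 8})"
    using x unfolding mem_NR_iff by blast
  obtain b where b: "b \<in> G" "r = b \<inter> Jset" "b \<inter> Jstar = {}"
    using r unfolding mem_RM_iff by blast
  have "vadd a b \<in> G" "vadd x r = vadd a b \<inter> Jset" "vadd a b \<inter> Jstar = a \<inter> Jstar"
    using golay_vadd_closed[OF G a(1) b(1)] a(2) b(2,3) by (simp_all add: vadd_Int_distrib)
  then show ?thesis
    using a(3) unfolding mem_NR_iff by metis
qed

lemma translate_RM_NR:
  assumes "golay_code G" "r \<in> RM G"
  shows "(\<lambda>\<beta>. vadd \<beta> r) ` NR G = NR G"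
proof (intro equalityI subsetI)
  fix x assume "x \<in> NR G"
  then show "x \<in> (\<lambda>\<beta>. vadd \<beta> r) ` NR G"
    using vadd_RM_in_NR[OF assms(1) _ assms(2)] by (metis image_eqI vadd_vadd_cancel)
qed (use vadd_RM_in_NR[OF assms(1) _ assms(2)] in blast)

lemma golay_word_outside_Jset:
  assumes "golay_code G" "w \<in> G" "w \<inter> Jset = {}"
  shows "w = w \<inter> Jstar"
  using golay_word_subset[OF assms(1,2)] assms(3) Jstar_Un_Jset by blast

lemma translate_NR_imp_RM:
  assumes G: "golay_code G" and J: "Jstar \<in> G" and \<alpha>: "\<alpha> \<in> NR G"
    and closed: "\<forall>x\<in>NR G. vadd x \<alpha> \<in> NR G"
  shows "\<alpha> \<in> RM G"
proof (rule ccontr)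
  assume "\<alpha> \<notin> RM G"
  obtain a where a: "a \<in> G" "\<alpha> = a \<inter> Jset"
    and a_trace: "a \<inter> Jstar = {} \<or> (\<exists>i\<in>{1..7}. a \<inter> Jstar = {i, 8})"
    using \<alpha> unfolding mem_NR_iff by blast
  with \<open>\<alpha> \<notin> RM G\<close> obtain i where i: "i \<in> {1..7}" "a \<inter> Jstar = {i, 8}"
    unfolding mem_RM_iff by blast
  define j :: nat where "j = (if i = 1 then 2 else 1)"
  have j: "j \<in> {1..7}" "j \<noteq> i"
    unfolding j_def by auto
  then have "j \<in> Jstar" "8 \<in> Jstar" "j \<noteq> 8"
    unfolding Jstar_def by auto
  then obtain d where d: "d \<in> G" "d \<inter> Jstar = {j, 8}"
    using golay_trace_pair[OF G J] by blast
  have "d \<inter> Jset \<in> NR G"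
    using d j unfolding mem_NR_iff by blast
  then have "vadd (d \<inter> Jset) \<alpha> \<in> NR G"
    using closed by blast
  then obtain e where e: "e \<in> G" "vadd (d \<inter> Jset) \<alpha> = e \<inter> Jset"
    and e_trace: "e \<inter> Jstar = {} \<or> (\<exists>k\<in>{1..7}. e \<inter> Jstar = {k, 8})"
    unfolding mem_NR_iff by blast
  define w where "w = vadd (vadd d a) e"
  have w: "w \<in> G"
    unfolding w_def using G a(1) d(1) e(1) by (simp add: golay_vadd_closed)
  have "w \<inter> Jset = {}"
    unfolding w_def vadd_Int_distrib using a(2) e(2) by simp
  then have "w = w \<inter> Jstar"
    using golay_word_outside_Jset[OF G w] by blast
  also have "\<dots> = vadd (vadd {j, 8} {i, 8}) (e \<inter> Jstar)"
    unfolding w_def vadd_Int_distrib d(2) i(2) ..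
  also have "vadd {j, 8} {i, 8} = {i, j}"
    using i(1) j unfolding vadd_def by auto
  finally have w_trace: "w = vadd {i, j} (e \<inter> Jstar)" .
  have "card {i, j} \<le> 2" "card (e \<inter> Jstar) \<le> 2" "finite (e \<inter> Jstar)"
    using e_trace by (auto simp: card_insert_if)
  then have "card w \<le> 4"
    unfolding w_trace using card_vadd_le[of "{i, j}" "e \<inter> Jstar"] by simp
  moreover have "w \<noteq> {}"
    unfolding w_trace vadd_eq_empty_iff using e_trace i(1) j by (auto simp: doubleton_eq_iff)
  ultimately show False
    using golay_small_word_empty[OF G w] by linarith
qed

lemma aut_map_determines_perm:
  assumes "aut_map \<alpha> \<sigma> = aut_map \<alpha>' \<sigma>'"
  shows "\<sigma> = \<sigma>'"
proof
  fix x
  have "\<alpha> = \<alpha>'"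
    using fun_cong[OF assms, of "{}"] by (simp add: aut_map_def)
  then have "vadd (vadd {\<sigma> x} \<alpha>) \<alpha> = vadd (vadd {\<sigma>' x} \<alpha>) \<alpha>"
    using fun_cong[OF assms, of "{x}"] by (simp add: aut_map_def)
  then show "\<sigma> x = \<sigma>' x"
    by simp
qed

lemma mu_aut_map: "\<sigma> permutes Jset \<Longrightarrow> \<alpha> \<subseteq> Jset \<Longrightarrow> mu (aut_map \<alpha> \<sigma>) = \<sigma>"
  unfolding mu_def by (rule the_equality) (use aut_map_determines_perm in blast)+

lemma aut_map_id: "aut_map \<alpha> id = (\<lambda>\<beta>. vadd \<beta> \<alpha>)"
  by (simp add: aut_map_def)

lemma translation_in_AutGamma16: "\<alpha> \<subseteq> Jset \<Longrightarrow> (\<lambda>\<beta>. vadd \<beta> \<alpha>) \<in> AutGamma16"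
  unfolding AutGamma16_def aut_map_id[symmetric] by (blast intro: permutes_id)

lemma mu_eq_id_iff_translation:
  assumes "f \<in> AutGamma16"
  shows "mu f = id \<longleftrightarrow> (\<exists>\<alpha>\<subseteq>Jset. f = (\<lambda>\<beta>. vadd \<beta> \<alpha>))"
proof -
  obtain \<alpha> \<sigma> where \<alpha>: "\<alpha> \<subseteq> Jset" "\<sigma> permutes Jset" and f: "f = aut_map \<alpha> \<sigma>"
    using assms unfolding AutGamma16_def by blast
  show ?thesis
  proof
    assume "mu f = id"
    then have "\<sigma> = id"
      using mu_aut_map[OF \<alpha>(2,1)] f by simp
    then show "\<exists>\<alpha>\<subseteq>Jset. f = (\<lambda>\<beta>. vadd \<beta> \<alpha>)"
      using f \<alpha>(1) aut_map_id by blast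
  next
    assume "\<exists>\<alpha>\<subseteq>Jset. f = (\<lambda>\<beta>. vadd \<beta> \<alpha>)"
    then show "mu f = id"
      using mu_aut_map[OF permutes_id] aut_map_id by metis
  qed
qed

theorem lemma3p1:
  fixes G :: "nat set set"
  assumes "golay_code G" and "Jstar \<in> G"
  shows "{f \<in> AutNR G. mu f = id} = T_R G"
proof (intro equalityI subsetI)
  fix f assume "f \<in> {f \<in> AutNR G. mu f = id}"
  then have "f \<in> AutGamma16" "mu f = id" and NR: "\<forall>x\<in>NR G. f x \<in> NR G"
    unfolding AutNR_def by auto
  then obtain \<alpha> where f: "f = (\<lambda>\<beta>. vadd \<beta> \<alpha>)"
    using mu_eq_id_iff_translation by blast
  then have "\<alpha> \<in> NR G" "\<forall>x\<in>NR G. vadd x \<alpha> \<in> NR G"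
    using NR empty_in_NR[OF assms(1)] by auto
  then have "\<alpha> \<in> RM G"
    by (rule translate_NR_imp_RM[OF assms])
  then show "f \<in> T_R G"
    unfolding T_R_def f by (rule imageI)
next
  fix f assume "f \<in> T_R G"
  then obtain r where r: "r \<in> RM G" and f: "f = (\<lambda>\<beta>. vadd \<beta> r)"
    unfolding T_R_def by blast
  then have "r \<subseteq> Jset"
    unfolding RM_def by blast
  then have "f \<in> AutGamma16"
    unfolding f by (rule translation_in_AutGamma16)
  moreover have "mu f = id"
    using mu_eq_id_iff_translation[OF \<open>f \<in> AutGamma16\<close>] \<open>r \<subseteq> Jset\<close> f by blast
  moreover have "f ` NR G = NR G"
    unfolding f using translate_RM_NR[OF assms(1) r] .
  ultimately show "f \<in> {f \<in> AutNR G. mu f = id}"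
    unfolding AutNR_def by blast
qed

end
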